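(* Let $\mathcal{L}$ be a logic, $\mathcal{Q}$ an involution lattice, and $f:\mathcal{L}\to\mathcal{Q}$ an observable. Then for all $A,B\in\mathcal{L}$: (a) $f$ is monotone: $A\le B\Rightarrow f(A)\le f(B)$; (b) if $\mathcal{L}$ is Boolean, then $f(A\vee B)=f(A)\vee f(B)$; (c) $f(A^\perp)\le f(A)^\perp$, and if $\mathcal{Q}$ is a logic then $f(A^\perp)=f(A)^\perp$; (d) if $\mathcal{L}$ is Boolean and $\mathcal{Q}$ is a logic, then $f$ is a logic homomorphism.
   Context: An involution lattice is a $\sigma$-complete bounded lattice (with $0,1$) carrying an order-reversing involution $A\mapsto A^\perp$ ($A^{\perp\perp}=A$, $A\le B\Rightarrow B^\perp\le A^\perp$), not necessarily a complement. A logic is an involution lattice in which $\perp$ is an orthocomplementation ($A\wedge A^\perp=0$, $A\vee A^\perp=1$) and which is orthomodular ($A\le B\Rightarrow B=A\vee(A^\perp\wedge B)$); it is Boolean if moreover distributive. $A,B$ are separated if $A\le B^\perp$; a subset is separated if any two distinct elements are separated. An observable $f:\mathcal{L}\to\mathcal{Q}$ is a map with (i) $f(0)=0$, $f(1)=1$; (ii) $f(\bigvee_{A\in\mathcal{L}_0}A)=\bigvee_{A\in\mathcal{L}_0}f(A)$ for every countable separated $\mathcal{L}_0\subset\mathcal{L}$; (iii) $A\le B^\perp\Rightarrow f(A)\le f(B)^\perp$. A logic homomorphism preserves $0,1$, $\perp$, and binary joins and meets. *)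

theory Defs
  imports Main "HOL-Library.Countable_Set"
begin

definition is_lub :: "'a::order set \<Rightarrow> 'a \<Rightarrow> bool" where
  "is_lub S x \<longleftrightarrow> (\<forall>y\<in>S. y \<le> x) \<and> (\<forall>z. (\<forall>y\<in>S. y \<le> z) \<longrightarrow> x \<le> z)"

text \<open>The join of a set (meaningful when the least upper bound exists).\<close>
definition lub :: "'a::order set \<Rightarrow> 'a" where
  "lub S = (THE x. is_lub S x)"

definition sigma_complete :: "'a::order itself \<Rightarrow> bool" where
  "sigma_complete _ \<longleftrightarrow> (\<forall>S::'a set. countable S \<longrightarrow> (\<exists>x. is_lub S x))"

definition involution_lattice :: "('a::bounded_lattice \<Rightarrow> 'a) \<Rightarrow> bool" where
  "involution_lattice perp \<longleftrightarrow>
     sigma_complete TYPE('a) \<and>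
     (\<forall>A. perp (perp A) = A) \<and>
     (\<forall>A B. A \<le> B \<longrightarrow> perp B \<le> perp A)"

definition is_logic :: "('a::bounded_lattice \<Rightarrow> 'a) \<Rightarrow> bool" where
  "is_logic perp \<longleftrightarrow>
     involution_lattice perp \<and>
     (\<forall>A. inf A (perp A) = bot \<and> sup A (perp A) = top) \<and>
     (\<forall>A B. A \<le> B \<longrightarrow> B = sup A (inf (perp A) B))"

definition is_boolean_logic :: "('a::bounded_lattice \<Rightarrow> 'a) \<Rightarrow> bool" where
  "is_boolean_logic perp \<longleftrightarrow>
     is_logic perp \<and> (\<forall>A B C::'a. sup A (inf B C) = inf (sup A B) (sup A C))"

definition separated_set :: "('a::bounded_lattice \<Rightarrow> 'a) \<Rightarrow> 'a set \<Rightarrow> bool" where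
  "separated_set perp S \<longleftrightarrow> (\<forall>A\<in>S. \<forall>B\<in>S. A \<noteq> B \<longrightarrow> A \<le> perp B)"

definition observable ::
  "('a::bounded_lattice \<Rightarrow> 'a) \<Rightarrow> ('b::bounded_lattice \<Rightarrow> 'b) \<Rightarrow> ('a \<Rightarrow> 'b) \<Rightarrow> bool" where
  "observable perpL perpQ f \<longleftrightarrow>
     f bot = bot \<and> f top = top \<and>
     (\<forall>S. countable S \<and> separated_set perpL S \<longrightarrow> f (lub S) = lub (f ` S)) \<and>
     (\<forall>A B. A \<le> perpL B \<longrightarrow> f A \<le> perpQ (f B))"

definition logic_hom ::
  "('a::bounded_lattice \<Rightarrow> 'a) \<Rightarrow> ('b::bounded_lattice \<Rightarrow> 'b) \<Rightarrow> ('a \<Rightarrow> 'b) \<Rightarrow> bool" where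
  "logic_hom perpL perpQ f \<longleftrightarrow>
     f bot = bot \<and> f top = top \<and>
     (\<forall>A. f (perpL A) = perpQ (f A)) \<and>
     (\<forall>A B. f (sup A B) = sup (f A) (f B)) \<and>
     (\<forall>A B. f (inf A B) = inf (f A) (f B))"

end

theory Submission
  imports Defs
begin

text \<open>Orthomodularity writes \<open>B \<ge> A\<close> as the join of the separated pair \<open>A\<close>, \<open>A\<^sup>\<perp> \<and> B\<close>; an
  observable preserves such joins, which gives monotonicity. In a Boolean logic every join
  \<open>A \<or> B\<close> has this form, giving additivity. Finally \<open>f(A) \<or> f(A\<^sup>\<perp>) = 1\<close> together with
  \<open>f(A\<^sup>\<perp>) \<le> f(A)\<^sup>\<perp>\<close> and orthomodularity of the target forces \<open>f(A\<^sup>\<perp>) = f(A)\<^sup>\<perp>\<close>.\<close>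

lemma lub_pair: "lub {a, b::'a::lattice} = sup a b"
proof -
  have "is_lub {a, b} (sup a b)"
    unfolding is_lub_def by auto
  moreover have "x = y" if "is_lub {a, b} x" and "is_lub {a, b} y" for x y
    using that unfolding is_lub_def by (meson antisym)
  ultimately show ?thesis
    unfolding lub_def by (metis theI)
qed

lemma involution_lattice_perp_perp [simp]:
  "involution_lattice perp \<Longrightarrow> perp (perp A) = A"
  unfolding involution_lattice_def by blast

lemma involution_lattice_perp_antimono:
  "involution_lattice perp \<Longrightarrow> A \<le> B \<Longrightarrow> perp B \<le> perp A"
  unfolding involution_lattice_def by blast

lemma involution_lattice_le_perp_commute:
  assumes "involution_lattice perp" and "A \<le> perp B"
  shows "B \<le> perp A"
  using involution_lattice_perp_antimono[OF assms] assms(1) by simp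

lemma involution_lattice_perp_sup:
  assumes inv: "involution_lattice perp"
  shows "perp (sup A B) = inf (perp A) (perp B)"
proof (rule antisym)
  show "perp (sup A B) \<le> inf (perp A) (perp B)"
    by (simp add: involution_lattice_perp_antimono[OF inv])
  have "A \<le> perp (inf (perp A) (perp B))"
    using involution_lattice_perp_antimono[OF inv, of "inf (perp A) (perp B)" "perp A"] inv
    by simp
  moreover have "B \<le> perp (inf (perp A) (perp B))"
    using involution_lattice_perp_antimono[OF inv, of "inf (perp A) (perp B)" "perp B"] inv
    by simp
  ultimately have "sup A B \<le> perp (inf (perp A) (perp B))"
    by simp
  then show "inf (perp A) (perp B) \<le> perp (sup A B)"
    using involution_lattice_le_perp_commute[OF inv] by blast
qed

lemma is_logic_involution_lattice: "is_logic perp \<Longrightarrow> involution_lattice perp"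
  unfolding is_logic_def by blast

lemma is_logic_sup_perp [simp]: "is_logic perp \<Longrightarrow> sup A (perp A) = top"
  unfolding is_logic_def by blast

lemma is_logic_orthomodular: "is_logic perp \<Longrightarrow> A \<le> B \<Longrightarrow> B = sup A (inf (perp A) B)"
  unfolding is_logic_def by blast

lemma is_logic_perp_top [simp]: "is_logic perp \<Longrightarrow> perp top = bot"
  unfolding is_logic_def by (metis inf_top_left)

lemma is_boolean_logic_is_logic: "is_boolean_logic perp \<Longrightarrow> is_logic perp"
  unfolding is_boolean_logic_def by blast

lemma is_boolean_logic_sup_eq:
  assumes "is_boolean_logic perp"
  shows "sup A B = sup A (inf (perp A) B)"
proof -
  have "sup A (inf (perp A) B) = inf (sup A (perp A)) (sup A B)"
    using assms unfolding is_boolean_logic_def by blast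
  then show ?thesis
    using is_boolean_logic_is_logic[OF assms] by simp
qed

lemma observable_top: "observable perpL perpQ f \<Longrightarrow> f top = top"
  and observable_bot: "observable perpL perpQ f \<Longrightarrow> f bot = bot"
  and observable_perp_le: "observable perpL perpQ f \<Longrightarrow> f (perpL A) \<le> perpQ (f A)"
  unfolding observable_def by auto

lemma observable_sup_separated:
  assumes L: "involution_lattice perpL" and f: "observable perpL perpQ f"
    and sep: "A \<le> perpL B"
  shows "f (sup A B) = sup (f A) (f B)"
proof -
  have "separated_set perpL {A, B}"
    using sep involution_lattice_le_perp_commute[OF L sep]
    unfolding separated_set_def by auto
  moreover have "countable {A, B}"
    by simp
  ultimately have "f (lub {A, B}) = lub (f ` {A, B})"
    using f unfolding observable_def by blast
  then show ?thesis
    by (simp add: lub_pair)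
qed

lemma observable_mono:
  assumes L: "is_logic perpL" and f: "observable perpL perpQ f" and "A \<le> B"
  shows "f A \<le> f B"
proof -
  have "A \<le> perpL (inf (perpL A) B)"
    using involution_lattice_le_perp_commute[OF is_logic_involution_lattice[OF L]] by simp
  then have "f (sup A (inf (perpL A) B)) = sup (f A) (f (inf (perpL A) B))"
    using observable_sup_separated[OF is_logic_involution_lattice[OF L] f] by blast
  then show ?thesis
    using is_logic_orthomodular[OF L \<open>A \<le> B\<close>] by (metis sup_ge1)
qed

lemma observable_sup:
  assumes L: "is_boolean_logic perpL" and f: "observable perpL perpQ f"
  shows "f (sup A B) = sup (f A) (f B)"
proof (rule antisym)
  have logic: "is_logic perpL"
    using L by (rule is_boolean_logic_is_logic)
  have "A \<le> perpL (inf (perpL A) B)"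
    using involution_lattice_le_perp_commute[OF is_logic_involution_lattice[OF logic]] by simp
  then have "f (sup A B) = sup (f A) (f (inf (perpL A) B))"
    using is_boolean_logic_sup_eq[OF L]
      observable_sup_separated[OF is_logic_involution_lattice[OF logic] f] by metis
  also have "\<dots> \<le> sup (f A) (f B)"
    using observable_mono[OF logic f, of "inf (perpL A) B" B] by (simp add: le_supI2)
  finally show "f (sup A B) \<le> sup (f A) (f B)" .
  show "sup (f A) (f B) \<le> f (sup A B)"
    using observable_mono[OF logic f] by simp
qed

lemma observable_perp:
  assumes L: "is_logic perpL" and Q: "is_logic perpQ" and f: "observable perpL perpQ f"
  shows "f (perpL A) = perpQ (f A)"
proof -
  have "A \<le> perpL (perpL A)"
    using L by (simp add: is_logic_involution_lattice)
  then have "sup (f A) (f (perpL A)) = f (sup A (perpL A))"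
    using observable_sup_separated[OF is_logic_involution_lattice[OF L] f] by simp
  then have "sup (f (perpL A)) (f A) = top"
    using L observable_top[OF f] by (simp add: sup_commute)
  then have "inf (perpQ (f (perpL A))) (perpQ (f A)) = bot"
    using Q by (simp flip: involution_lattice_perp_sup[OF is_logic_involution_lattice[OF Q]])
  then have "sup (f (perpL A)) (inf (perpQ (f (perpL A))) (perpQ (f A))) = f (perpL A)"
    by simp
  then show ?thesis
    using is_logic_orthomodular[OF Q observable_perp_le[OF f]] by simp
qed

lemma observable_inf:
  assumes L: "is_boolean_logic perpL" and Q: "is_logic perpQ" and f: "observable perpL perpQ f"
  shows "f (inf A B) = inf (f A) (f B)"
proof -
  have logic: "is_logic perpL"
    using L by (rule is_boolean_logic_is_logic)
  note invL = is_logic_involution_lattice[OF logic] and invQ = is_logic_involution_lattice[OF Q]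
  have "inf A B = perpL (sup (perpL A) (perpL B))"
    using involution_lattice_perp_sup[OF invL] invL by simp
  then have "f (inf A B) = perpQ (sup (perpQ (f A)) (perpQ (f B)))"
    using observable_sup[OF L f] observable_perp[OF logic Q f] by simp
  then show ?thesis
    using involution_lattice_perp_sup[OF invQ] invQ by simp
qed

lemma observable_logic_hom:
  assumes L: "is_boolean_logic perpL" and Q: "is_logic perpQ" and f: "observable perpL perpQ f"
  shows "logic_hom perpL perpQ f"
proof -
  have "is_logic perpL"
    using L by (rule is_boolean_logic_is_logic)
  then show ?thesis
    unfolding logic_hom_def
    using observable_bot[OF f] observable_top[OF f] observable_perp[OF _ Q f]
      observable_sup[OF L f] observable_inf[OF L Q f] by blast
qed

theorem lemma3p2:
  fixes perpL :: "'a::bounded_lattice \<Rightarrow> 'a"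
    and perpQ :: "'b::bounded_lattice \<Rightarrow> 'b"
    and f :: "'a \<Rightarrow> 'b"
  assumes "is_logic perpL"
    and "involution_lattice perpQ"
    and "observable perpL perpQ f"
  shows "(\<forall>A B. A \<le> B \<longrightarrow> f A \<le> f B)
    \<and> (is_boolean_logic perpL \<longrightarrow> (\<forall>A B. f (sup A B) = sup (f A) (f B)))
    \<and> (\<forall>A. f (perpL A) \<le> perpQ (f A))
    \<and> (is_logic perpQ \<longrightarrow> (\<forall>A. f (perpL A) = perpQ (f A)))
    \<and> (is_boolean_logic perpL \<and> is_logic perpQ \<longrightarrow> logic_hom perpL perpQ f)"
proof (intro conjI allI impI)
  show "f A \<le> f B" if "A \<le> B" for A B
    using observable_mono[OF assms(1,3) that] .
  show "f (sup A B) = sup (f A) (f B)" if "is_boolean_logic perpL" for A B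
    using observable_sup[OF that assms(3)] .
  show "f (perpL A) \<le> perpQ (f A)" for A
    using observable_perp_le[OF assms(3)] .
  show "f (perpL A) = perpQ (f A)" if "is_logic perpQ" for A
    using observable_perp[OF assms(1) that assms(3)] .
  show "logic_hom perpL perpQ f" if "is_boolean_logic perpL \<and> is_logic perpQ"
    using observable_logic_hom[OF _ _ assms(3)] that by blast
qed

end
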